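(* Under the setup in the context, assume in addition that the block GMRES residual $F_{j-1}^{(G)}$ has rank $L$. Then the cosines of the $L$ principal angles between $\mathcal R(F_{j-1}^{(G)})$ and $\mathcal R(AW_j)$ (which equals $A\mathbb K_j(A,F_0)$ when no replacement of dependent Arnoldi vectors has occurred) are exactly the singular values of $Q_j^{(11)}$. Equivalently, if $Q_j^{(11)}=\mathcal U_1\mathcal C\mathcal V_1^*$ and $Q_j^{(21)}=\mathcal U_2\mathcal S\mathcal V_1^*$ is a CS decomposition of the first block column of $\Omega_j$ (with $\mathcal U_1,\mathcal U_2,\mathcal V_1$ unitary, $\mathcal C,\mathcal S$ real nonnegative diagonal with $\mathcal C^2+\mathcal S^2=I_L$), then the diagonal entries of $\mathcal C$ and $\mathcal S$ are the cosines and sines of these principal angles.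
   Context: Let $n,L\ge1$, $A\in\mathbb C^{n\times n}$, $B,X_0\in\mathbb C^{n\times L}$, $F_0=B-AX_0$, and let $F_0=V_1S_0$ be a reduced QR factorization ($V_1\in\mathbb C^{n\times L}$ with orthonormal columns, $S_0\in\mathbb C^{L\times L}$ upper triangular). Fix $j\ge2$. The block Arnoldi process (possibly with dependent basis vectors replaced by new orthonormal vectors) yields $W_k=[V_1,\dots,V_k]\in\mathbb C^{n\times kL}$ ($k\le j+1$) with orthonormal columns, $V_i\in\mathbb C^{n\times L}$, and the block Arnoldi relation $AW_j=W_{j+1}\bar H_j$, where $\bar H_j=(H_{ik})\in\mathbb C^{(j+1)L\times jL}$ has $L\times L$ blocks $H_{ik}$, is block upper Hessenberg ($H_{ik}=0$ for $i>k+1$), and each $H_{k+1,k}$ is upper triangular. For $k\le j$, $\bar H_k$ denotes the leading $(k+1)L\times kL$ submatrix of $\bar H_j$. $E^{[m]}\in\mathbb R^{mL\times L}$ denotes the first $L$ columns of $I_{mL}$. For $k\ge1$ with $\bar H_k$ of full column rank, the block GMRES iterate is $X_k^{(G)}=X_0+W_kY_k^{(G)}$, where $Y_k^{(G)}\in\mathbb C^{kL\times L}$ is the unique minimizer of $\|\bar H_kY-E^{[k+1]}S_0\|_F$ (Frobenius norm), and $F_k^{(G)}=B-AX_k^{(G)}$. $\mathbb K_j(A,F_0)$ is the span of all columns of $F_0,AF_0,\dots,A^{j-1}F_0$. Block QR factorization: assume $\bar H_j$ has full column rank. There are unitary matrices $\Omega_i=\begin{bmatrix}Q_i^{(11)}&Q_i^{(12)}\\Q_i^{(21)}&Q_i^{(22)}\end{bmatrix}\in\mathbb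 C^{2L\times 2L}$ ($i=1,\dots,j$, all four blocks $L\times L$); for $m\ge i+1$ put $Q_i^{(m)}=\mathrm{diag}(I_{(i-1)L},\Omega_i,I_{(m-i-1)L})\in\mathbb C^{mL\times mL}$ and $\bar Q_k=Q_k^{(k+1)}Q_{k-1}^{(k+1)}\cdots Q_1^{(k+1)}$. The $\Omega_i$ are chosen recursively so that $\bar Q_k\bar H_k=\begin{bmatrix}R_k\\ 0_{L\times kL}\end{bmatrix}$ with $R_k\in\mathbb C^{kL\times kL}$ upper triangular and nonsingular ($k=1,\dots,j$). Principal angles: for subspaces $\mathcal U,\mathcal W$ of $\mathbb C^n$ with $\dim\mathcal U=p\le\dim\mathcal W$ and matrices $U,W$ with orthonormal columns spanning them, the $p$ principal angles $\theta_1,\dots,\theta_p\in[0,\pi/2]$ are defined by: $\cos\theta_1,\dots,\cos\theta_p$ are the singular values of $W^*U$. $\mathcal R(\cdot)$ denotes column space. *)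

theory Defs
  imports "Jordan_Normal_Form.Schur_Decomposition" "Jordan_Normal_Form.Char_Poly"
    "HOL-Computational_Algebra.Polynomial"
begin

text \<open>All matrices are complex matrices of the Jordan_Normal_Form library; indices are 0-based,
  block indices (as in the paper) are 1-based.\<close>

definition blk :: "nat \<Rightarrow> nat \<Rightarrow> nat \<Rightarrow> nat \<Rightarrow> complex mat \<Rightarrow> complex mat" where
  "blk r0 c0 r c M = mat r c (\<lambda>(a,b). M $$ (a + r0, b + c0))"

definition orthonormal_cols :: "complex mat \<Rightarrow> bool" where
  "orthonormal_cols M \<longleftrightarrow> mat_adjoint M * M = 1\<^sub>m (dim_col M)"

definition unitary_mat :: "complex mat \<Rightarrow> bool" where
  "unitary_mat M \<longleftrightarrow> dim_row M = dim_col M \<and> orthonormal_cols M"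

definition full_col_rank :: "complex mat \<Rightarrow> bool" where
  "full_col_rank M \<longleftrightarrow> (\<forall>x \<in> carrier_vec (dim_col M). M *\<^sub>v x = 0\<^sub>v (dim_row M) \<longrightarrow> x = 0\<^sub>v (dim_col M))"

definition colspace :: "complex mat \<Rightarrow> complex vec set" where
  "colspace M = {M *\<^sub>v x | x. x \<in> carrier_vec (dim_col M)}"

definition upper_tri :: "complex mat \<Rightarrow> bool" where
  "upper_tri M \<longleftrightarrow> (\<forall>a < dim_row M. \<forall>b < dim_col M. b < a \<longrightarrow> M $$ (a,b) = 0)"

definition frob_norm :: "complex mat \<Rightarrow> real" where
  "frob_norm M = sqrt (\<Sum>a < dim_row M. \<Sum>b < dim_col M. (cmod (M $$ (a,b)))^2)"

definition Emat :: "nat \<Rightarrow> nat \<Rightarrow> complex mat" where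
  "Emat L m = mat (m*L) L (\<lambda>(a,b). if a = b then 1 else 0)"

text \<open>Block upper Hessenberg (L x L blocks) with upper triangular subdiagonal blocks.\<close>
definition block_hessenberg :: "nat \<Rightarrow> complex mat \<Rightarrow> bool" where
  "block_hessenberg L H \<longleftrightarrow>
     (\<forall>a < dim_row H. \<forall>b < dim_col H.
        (a div L > b div L + 1 \<longrightarrow> H $$ (a,b) = 0) \<and>
        (a div L = b div L + 1 \<and> a mod L > b mod L \<longrightarrow> H $$ (a,b) = 0))"

text \<open>Q_i^(m) = diag(I_{(i-1)L}, Omega, I_{(m-i-1)L}).\<close>
definition Qemb :: "nat \<Rightarrow> nat \<Rightarrow> nat \<Rightarrow> complex mat \<Rightarrow> complex mat" where
  "Qemb L m i Om = mat (m*L) (m*L) (\<lambda>(a,b).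
     if (i-1)*L \<le> a \<and> a < (i+1)*L \<and> (i-1)*L \<le> b \<and> b < (i+1)*L
     then Om $$ (a - (i-1)*L, b - (i-1)*L)
     else if a = b then 1 else 0)"

fun prodQ :: "nat \<Rightarrow> (nat \<Rightarrow> complex mat) \<Rightarrow> nat \<Rightarrow> nat \<Rightarrow> complex mat" where
  "prodQ L Om m 0 = 1\<^sub>m (m*L)"
| "prodQ L Om m (Suc i) = Qemb L m (Suc i) (Om (Suc i)) * prodQ L Om m i"

definition Qbar :: "nat \<Rightarrow> (nat \<Rightarrow> complex mat) \<Rightarrow> nat \<Rightarrow> complex mat" where
  "Qbar L Om k = prodQ L Om (k+1) k"

definition singvals :: "complex mat \<Rightarrow> real multiset" where
  "singvals M = image_mset (\<lambda>z. sqrt (Re z)) (proots (char_poly (mat_adjoint M * M)))"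

text \<open>Principal angles between R(U) and R(W) (U, W with orthonormal columns, dim R(U) \<le> dim R(W)):
  the angles in [0, pi/2] whose cosines are the singular values of W^* U.\<close>
definition principal_angles :: "complex mat \<Rightarrow> complex mat \<Rightarrow> real multiset" where
  "principal_angles U W = image_mset arccos (singvals (mat_adjoint W * U))"

definition real_nonneg_diag :: "complex mat \<Rightarrow> bool" where
  "real_nonneg_diag M \<longleftrightarrow> (\<forall>a < dim_row M. \<forall>b < dim_col M.
      (a \<noteq> b \<longrightarrow> M $$ (a,b) = 0) \<and> (a = b \<longrightarrow> Im (M $$ (a,a)) = 0 \<and> Re (M $$ (a,a)) \<ge> 0))"

end

theory Submission
  imports Defs
begin

(* The proof rests on two orthonormal bases read off the block QR factorization.
   Since Qbar_{j-1} Hbar_{j-1} = [R_{j-1}; 0] with R_{j-1} invertible, the least squares residual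
   satisfies Qbar_{j-1} (E S0 - Hbar_{j-1} Y) = [0; g], hence F_{j-1} = U0 g with
   U0 = W_j Qbar_{j-1}^* E_last, E_last the last L columns of I_{jL}.  Similarly
   A W_j = W_{j+1} Hbar_j = W_{j+1} Qbar_j^* [R_j; 0], so the first jL columns W0 of
   W_{j+1} Qbar_j^* span R(A W_j).  As Qbar_j = Q_j^{(j+1)} diag(Qbar_{j-1}, I_L), the cross Gram
   matrix W0^* U0 is the block column [0; Q_j^{(11)}], whose singular values are those of
   Q_j^{(11)}.  Singular values of V^* U do not depend on the choice of orthonormal bases U, V,
   and those of Q_j^{(11)} lie in [0, 1] because Q_j^{(11)*} Q_j^{(11)} + Q_j^{(21)*} Q_j^{(21)} = I,
   so they are cosines of angles; a CS decomposition then exhibits the matching sines. *)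

section \<open>Adjoints, blocks and column spaces\<close>

lemma mat_adjoint_altdef:
  "mat_adjoint (A::complex mat) = mat (dim_col A) (dim_row A) (\<lambda>(i,j). cnj (A $$ (j,i)))"
  unfolding mat_adjoint_def by (rule eq_matI) (auto simp: mat_of_rows_def)

lemma mat_adjoint_dim [simp]:
  "dim_row (mat_adjoint (A::complex mat)) = dim_col A"
  "dim_col (mat_adjoint (A::complex mat)) = dim_row A"
  by (simp_all add: mat_adjoint_altdef)

lemma index_mat_adjoint [simp]:
  "i < dim_col A \<Longrightarrow> j < dim_row A \<Longrightarrow> mat_adjoint (A::complex mat) $$ (i,j) = cnj (A $$ (j,i))"
  by (simp add: mat_adjoint_altdef)

lemma mat_adjoint_carrier [simp]:
  "(A::complex mat) \<in> carrier_mat r c \<Longrightarrow> mat_adjoint A \<in> carrier_mat c r"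
  unfolding carrier_mat_def by simp

lemma mat_adjoint_adjoint [simp]: "mat_adjoint (mat_adjoint (A::complex mat)) = A"
  by (rule eq_matI) simp_all

lemma mat_adjoint_one [simp]: "mat_adjoint (1\<^sub>m n :: complex mat) = 1\<^sub>m n"
  by (rule eq_matI) simp_all

lemma scalar_prod_row_col [simp]:
  "dim_col A = dim_row B \<Longrightarrow> i < dim_row A \<Longrightarrow> j < dim_col B \<Longrightarrow>
   row A i \<bullet> col B j = (\<Sum>k<dim_row B. A $$ (i,k) * B $$ (k,j))"
  by (simp add: scalar_prod_def atLeast0LessThan)

lemma mat_adjoint_mult:
  "dim_col (A::complex mat) = dim_row B \<Longrightarrow> mat_adjoint (A * B) = mat_adjoint B * mat_adjoint A"
  by (rule eq_matI) (simp_all add: mult.commute)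

lemma assoc_mult_mat':
  "dim_col A = dim_row B \<Longrightarrow> dim_col B = dim_row C \<Longrightarrow> (A::'a::semiring_0 mat) * B * C = A * (B * C)"
  by (rule assoc_mult_mat[of A "dim_row A" "dim_col A" B "dim_col B" C "dim_col C"]) auto

lemma mult_cancel_left_inverse:
  "P * Q = 1\<^sub>m k \<Longrightarrow> dim_col P = dim_row Q \<Longrightarrow> dim_col Q = dim_row X \<Longrightarrow> dim_row X = k
   \<Longrightarrow> (P::'a::semiring_1 mat) * (Q * X) = X"
  by (subst assoc_mult_mat'[symmetric]) auto

lemma sum_nat_single:
  "(\<And>k. k < (N::nat) \<Longrightarrow> k \<noteq> t \<Longrightarrow> f k = 0) \<Longrightarrow> (\<Sum>k<N. f k) = (if t < N then f t else 0)"
  by (cases "t < N") (auto intro: sum.neutral simp: sum.remove[of "{..<N}" t])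

lemma sum_nat_block:
  assumes "\<And>k. k < (N::nat) \<Longrightarrow> \<not> (s \<le> k \<and> k < s + c) \<Longrightarrow> f k = 0" "s + c \<le> N"
  shows "(\<Sum>k<N. f k) = (\<Sum>k<c. f (k + s))"
proof -
  have "(\<Sum>k<N. f k) = (\<Sum>k\<in>{s..<s+c}. f k)"
    by (rule sum.mono_neutral_right) (use assms in auto)
  also have "\<dots> = (\<Sum>k\<in>{0..<c}. f (k + s))"
    using sum.shift_bounds_nat_ivl[of f 0 s c] by (simp add: add.commute)
  finally show ?thesis by (simp add: atLeast0LessThan)
qed

lemma mult_orthonormal_cols:
  assumes A: "(A::complex mat) \<in> carrier_mat p q" and B: "B \<in> carrier_mat q r"
    and oA: "mat_adjoint A * A = 1\<^sub>m q" and oB: "mat_adjoint B * B = 1\<^sub>m r"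
  shows "mat_adjoint (A * B) * (A * B) = 1\<^sub>m r"
proof -
  have "mat_adjoint (A * B) * (A * B) = mat_adjoint B * ((mat_adjoint A * A) * B)"
    using A B by (simp add: mat_adjoint_mult assoc_mult_mat')
  then show ?thesis using B oA oB by simp
qed

lemma unitary_right_inverse:
  "(Q::complex mat) \<in> carrier_mat n n \<Longrightarrow> mat_adjoint Q * Q = 1\<^sub>m n \<Longrightarrow> Q * mat_adjoint Q = 1\<^sub>m n"
  by (rule mat_mult_left_right_inverse[of "mat_adjoint Q" n Q]) auto

lemma invertible_if_det_nonzero:
  assumes R: "(R::complex mat) \<in> carrier_mat k k" and d: "det R \<noteq> 0"
  obtains Ri where "Ri \<in> carrier_mat k k" "R * Ri = 1\<^sub>m k"
  using det_non_zero_imp_unit[OF R d, of "()"] unfolding Units_def ring_mat_def by auto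

lemma blk_carrier [simp]: "blk r0 c0 r c M \<in> carrier_mat r c"
  and blk_dim [simp]: "dim_row (blk r0 c0 r c M) = r" "dim_col (blk r0 c0 r c M) = c"
  by (auto simp: blk_def)

lemma index_blk [simp]: "a < r \<Longrightarrow> b < c \<Longrightarrow> blk r0 c0 r c M $$ (a,b) = M $$ (a + r0, b + c0)"
  by (simp add: blk_def)

lemma blk_blk:
  "r0 + r \<le> r' \<Longrightarrow> c0 + c \<le> c' \<Longrightarrow> blk r0 c0 r c (blk r0' c0' r' c' M) = blk (r0 + r0') (c0 + c0') r c M"
  by (rule eq_matI) (auto simp: add.assoc)

lemma blk_whole: "M \<in> carrier_mat r c \<Longrightarrow> blk 0 0 r c M = M"
  by (rule eq_matI) auto

definition embed_mat :: "nat \<Rightarrow> nat \<Rightarrow> nat \<Rightarrow> complex mat" where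
  "embed_mat r c s = mat r c (\<lambda>(a,b). if a = b + s then 1 else 0)"

lemma embed_mat_carrier [simp]: "embed_mat r c s \<in> carrier_mat r c"
  and embed_mat_dim [simp]: "dim_row (embed_mat r c s) = r" "dim_col (embed_mat r c s) = c"
  by (auto simp: embed_mat_def)

lemma index_embed_mat [simp]:
  "a < r \<Longrightarrow> b < c \<Longrightarrow> embed_mat r c s $$ (a,b) = (if a = b + s then 1 else 0)"
  by (simp add: embed_mat_def)

lemma Emat_embed_mat: "Emat L j = embed_mat (j*L) L 0"
  unfolding Emat_def embed_mat_def by (rule eq_matI) auto

lemma Emat_carrier: "Emat L j \<in> carrier_mat (j*L) L"
  by (simp add: Emat_embed_mat)

lemma mult_embed_mat:
  assumes "M \<in> carrier_mat p r" "s + c \<le> r"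
  shows "M * embed_mat r c s = blk 0 s p c M"
proof (rule eq_matI)
  fix a b assume "a < dim_row (blk 0 s p c M)" "b < dim_col (blk 0 s p c M)"
  then show "(M * embed_mat r c s) $$ (a,b) = blk 0 s p c M $$ (a,b)"
    using assms by (simp, subst sum_nat_single[where t = "b+s"]) auto
qed (use assms in auto)

lemma adjoint_embed_mat_mult:
  assumes "M \<in> carrier_mat r q" "s + c \<le> r"
  shows "mat_adjoint (embed_mat r c s) * M = blk s 0 c q M"
proof (rule eq_matI)
  fix a b assume "a < dim_row (blk s 0 c q M)" "b < dim_col (blk s 0 c q M)"
  then show "(mat_adjoint (embed_mat r c s) * M) $$ (a,b) = blk s 0 c q M $$ (a,b)"
    using assms by (simp, subst sum_nat_single[where t = "a+s"]) auto
qed (use assms in auto)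

lemma embed_mat_mult:
  assumes "M \<in> carrier_mat c q"
  shows "embed_mat r c s * M = mat r q (\<lambda>(a,b). if s \<le> a \<and> a < s + c then M $$ (a - s, b) else 0)"
proof (rule eq_matI)
  fix a b assume "a < dim_row (mat r q (\<lambda>(a,b). if s \<le> a \<and> a < s + c then M $$ (a - s, b) else 0))"
    "b < dim_col (mat r q (\<lambda>(a,b). if s \<le> a \<and> a < s + c then M $$ (a - s, b) else 0))"
  then show "(embed_mat r c s * M) $$ (a,b) =
      mat r q (\<lambda>(a,b). if s \<le> a \<and> a < s + c then M $$ (a - s, b) else 0) $$ (a,b)"
    using assms by (simp, subst sum_nat_single[where t = "a-s"]) auto
qed (use assms in auto)

lemma embed_mat_orthonormal: "s + c \<le> r \<Longrightarrow> mat_adjoint (embed_mat r c s) * embed_mat r c s = 1\<^sub>m c"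
  by (subst adjoint_embed_mat_mult[of _ r c]) (auto intro!: eq_matI)

lemma embed_mat_mult_embed_mat: "t + d \<le> c \<Longrightarrow> embed_mat r c s * embed_mat c d t = embed_mat r d (s + t)"
  by (subst embed_mat_mult[of _ c d]) (auto intro!: eq_matI)

lemma embed_mat_blk:
  assumes M: "M \<in> carrier_mat r q" and sc: "s + c \<le> r"
    and zero: "\<And>a b. a < r \<Longrightarrow> b < q \<Longrightarrow> \<not> (s \<le> a \<and> a < s + c) \<Longrightarrow> M $$ (a,b) = 0"
  shows "embed_mat r c s * blk s 0 c q M = M"
  unfolding embed_mat_mult[OF blk_carrier] using M sc zero
  by (intro eq_matI) (auto simp: le_add_diff_inverse2)

lemma col_mem_colspace:
  assumes "(X::complex mat) \<in> carrier_mat n r" "i < r" shows "col X i \<in> colspace X"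
proof -
  have "col X i = col (X * 1\<^sub>m r) i" using assms by simp
  also have "\<dots> = X *\<^sub>v unit_vec r i" using assms by (subst col_mult2[of _ n r]) auto
  finally show ?thesis unfolding colspace_def using assms by auto
qed

lemma colspace_mult_subset:
  assumes A: "(A::complex mat) \<in> carrier_mat p q" and B: "B \<in> carrier_mat q r"
  shows "colspace (A * B) \<subseteq> colspace A"
proof
  fix v assume "v \<in> colspace (A * B)"
  then obtain x where x: "x \<in> carrier_vec r" "v = (A * B) *\<^sub>v x" unfolding colspace_def using A B by auto
  then have "v = A *\<^sub>v (B *\<^sub>v x)" using A B by simp
  then show "v \<in> colspace A" unfolding colspace_def using A B x by auto
qed

lemma orthonormal_projector_fixes:
  assumes Z: "(Z::complex mat) \<in> carrier_mat n q" and oZ: "mat_adjoint Z * Z = 1\<^sub>m q"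
    and X: "X \<in> carrier_mat n r" and sub: "colspace X \<subseteq> colspace Z"
  shows "Z * (mat_adjoint Z * X) = X"
proof (rule mat_col_eqI)
  fix i assume "i < dim_col X"
  then have i: "i < r" using X by simp
  from sub col_mem_colspace[OF X i] obtain y where y: "y \<in> carrier_vec q" "col X i = Z *\<^sub>v y"
    unfolding colspace_def using Z by auto
  have ZX: "mat_adjoint Z * X \<in> carrier_mat q r" by (rule mult_carrier_mat[OF mat_adjoint_carrier[OF Z] X])
  have "col (Z * (mat_adjoint Z * X)) i = Z *\<^sub>v col (mat_adjoint Z * X) i"
    by (rule col_mult2[OF Z ZX i])
  also have "col (mat_adjoint Z * X) i = mat_adjoint Z *\<^sub>v col X i"
    by (rule col_mult2[OF mat_adjoint_carrier[OF Z] X i])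
  also have "mat_adjoint Z *\<^sub>v col X i = (mat_adjoint Z * Z) *\<^sub>v y"
    using y by (simp add: assoc_mult_mat_vec[OF mat_adjoint_carrier[OF Z] Z y(1)])
  finally show "col (Z * (mat_adjoint Z * X)) i = col X i" using oZ y by simp
qed (use Z X in auto)

section \<open>Embedded rotations\<close>

lemma Qemb_carrier [simp]: "Qemb L m i Om \<in> carrier_mat (m*L) (m*L)"
  and Qemb_dim [simp]: "dim_row (Qemb L m i Om) = m*L" "dim_col (Qemb L m i Om) = m*L"
  by (auto simp: Qemb_def)

lemma Qemb_unitary:
  assumes Om: "Om \<in> carrier_mat (2*L) (2*L)" "mat_adjoint Om * Om = 1\<^sub>m (2*L)"
    and i: "1 \<le> i" "i + 1 \<le> m"
  shows "mat_adjoint (Qemb L m i Om) * Qemb L m i Om = 1\<^sub>m (m*L)"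
proof (rule eq_matI)
  let ?Q = "Qemb L m i Om"
  define s where "s = (i-1)*L"
  let ?inside = "\<lambda>a. s \<le> a \<and> a < s + 2*L"
  have sL: "s + 2*L = (i+1)*L" unfolding s_def using i by (cases i) (auto simp: algebra_simps)
  have le: "(i+1)*L \<le> m*L" using i by (intro mult_le_mono1) simp
  have Q: "?Q $$ (a,b) = (if ?inside a \<and> ?inside b then Om $$ (a - s, b - s)
      else if a = b then 1 else 0)" if "a < m*L" "b < m*L" for a b
    unfolding Qemb_def s_def[symmetric] sL using that by simp
  fix a b assume "a < dim_row (1\<^sub>m (m*L) :: complex mat)" "b < dim_col (1\<^sub>m (m*L) :: complex mat)"
  then have ab: "a < m*L" "b < m*L" by auto
  have "(mat_adjoint ?Q * ?Q) $$ (a,b) = (\<Sum>k<m*L. cnj (?Q $$ (k,a)) * ?Q $$ (k,b))"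
    using ab by simp
  also have "\<dots> = 1\<^sub>m (m*L) $$ (a,b)"
  proof (cases "?inside a \<and> ?inside b")
    case True
    have "(\<Sum>k<m*L. cnj (?Q $$ (k,a)) * ?Q $$ (k,b)) =
        (\<Sum>k<2*L. cnj (?Q $$ (k + s,a)) * ?Q $$ (k + s,b))"
      by (rule sum_nat_block) (use ab True sL le in \<open>auto simp: Q\<close>)
    also have "\<dots> = (\<Sum>k<2*L. cnj (Om $$ (k, a - s)) * Om $$ (k, b - s))"
      by (rule sum.cong) (use ab True sL le in \<open>auto simp: Q\<close>)
    also have "\<dots> = (mat_adjoint Om * Om) $$ (a - s, b - s)"
      using Om(1) True by (simp add: less_diff_conv2)
    finally show ?thesis using Om(2) True ab by auto
  next
    case False
    \<comment> \<open>a column of Q outside the Om-block is a unit vector, so the sum has a single term\<close>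
    then consider "\<not> ?inside a" | "\<not> ?inside b" by blast
    then show ?thesis
    proof cases
      case 1
      have "?Q $$ (k,a) = (if k = a then 1 else 0)" if "k < m*L" for k
        using Q[of k a] that ab 1 by simp
      moreover have "?Q $$ (a,b) = (if a = b then 1 else 0)" using Q[of a b] ab 1 by simp
      ultimately show ?thesis using ab by (simp add: sum_nat_single[where t = a])
    next
      case 2
      have "?Q $$ (k,b) = (if k = b then 1 else 0)" if "k < m*L" for k
        using Q[of k b] that ab 2 by simp
      moreover have "?Q $$ (b,a) = (if a = b then 1 else 0)" using Q[of b a] ab 2 by auto
      ultimately show ?thesis using ab by (simp add: sum_nat_single[where t = b])
    qed
  qed
  finally show "(mat_adjoint ?Q * ?Q) $$ (a,b) = 1\<^sub>m (m*L) $$ (a,b)" .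
qed auto

lemma prodQ_carrier [simp]: "prodQ L Om m i \<in> carrier_mat (m*L) (m*L)"
  by (induction i) auto

lemma prodQ_dim [simp]: "dim_row (prodQ L Om m i) = m*L" "dim_col (prodQ L Om m i) = m*L"
  using prodQ_carrier by blast+

lemma prodQ_unitary:
  "\<forall>i'\<in>{1..i}. Om i' \<in> carrier_mat (2*L) (2*L) \<and> mat_adjoint (Om i') * Om i' = 1\<^sub>m (2*L)
   \<Longrightarrow> i + 1 \<le> m \<Longrightarrow> mat_adjoint (prodQ L Om m i) * prodQ L Om m i = 1\<^sub>m (m*L)"
proof (induction i)
  case (Suc i)
  have "mat_adjoint (Qemb L m (Suc i) (Om (Suc i))) * Qemb L m (Suc i) (Om (Suc i)) = 1\<^sub>m (m*L)"
    by (rule Qemb_unitary) (use Suc.prems in auto)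
  moreover have "mat_adjoint (prodQ L Om m i) * prodQ L Om m i = 1\<^sub>m (m*L)"
    by (rule Suc.IH) (use Suc.prems in auto)
  ultimately show ?case by (simp add: mult_orthonormal_cols[of _ "m*L" "m*L"])
qed simp

lemma Qemb_mult_embed_mat:
  assumes "i + 1 \<le> k"
  shows "Qemb L (k+1) i Om * embed_mat ((k+1)*L) (k*L) 0 = embed_mat ((k+1)*L) (k*L) 0 * Qemb L k i Om"
proof -
  have le: "(i+1)*L \<le> k*L" using assms by (rule mult_le_mono1)
  have "Qemb L (k+1) i Om * embed_mat ((k+1)*L) (k*L) 0 = blk 0 0 ((k+1)*L) (k*L) (Qemb L (k+1) i Om)"
    by (rule mult_embed_mat[OF Qemb_carrier]) simp
  also have "\<dots> = embed_mat ((k+1)*L) (k*L) 0 * Qemb L k i Om"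
    unfolding embed_mat_mult[OF Qemb_carrier]
    using le by (intro eq_matI) (auto simp: Qemb_def)
  finally show ?thesis .
qed

lemma prodQ_mult_embed_mat:
  "i < k \<Longrightarrow> prodQ L Om (k+1) i * embed_mat ((k+1)*L) (k*L) 0 = embed_mat ((k+1)*L) (k*L) 0 * prodQ L Om k i"
proof (induction i)
  case (Suc i)
  let ?E = "embed_mat ((k+1)*L) (k*L) 0"
  let ?Q1 = "Qemb L (k+1) (Suc i) (Om (Suc i))" and ?Q0 = "Qemb L k (Suc i) (Om (Suc i))"
  have "prodQ L Om (k+1) (Suc i) * ?E = ?Q1 * (prodQ L Om (k+1) i * ?E)"
    by (simp add: assoc_mult_mat')
  also have "\<dots> = (?Q1 * ?E) * prodQ L Om k i"
    using Suc by (simp add: assoc_mult_mat')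
  also have "?Q1 * ?E = ?E * ?Q0" by (rule Qemb_mult_embed_mat) (use Suc in simp)
  also have "(?E * ?Q0) * prodQ L Om k i = ?E * prodQ L Om k (Suc i)"
    by (simp add: assoc_mult_mat')
  finally show ?case .
qed simp

lemma Qemb_block_col:
  assumes "i \<ge> 1"
  shows "blk 0 ((i-1)*L) (i*L) L (Qemb L (i+1) i Om) = embed_mat (i*L) L ((i-1)*L) * blk 0 0 L L Om"
proof -
  have iL: "(i-1)*L + L = i*L" "(i+1)*L = i*L + L" using assms by (cases i; simp add: algebra_simps)+
  show ?thesis unfolding embed_mat_mult[OF blk_carrier]
    by (intro eq_matI) (auto simp: Qemb_def iL iL(1)[symmetric])
qed

section \<open>Frobenius norm and least squares\<close>

definition frob_sq :: "complex mat \<Rightarrow> real" where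
  "frob_sq M = (\<Sum>a < dim_row M. \<Sum>b < dim_col M. (cmod (M $$ (a,b)))^2)"

lemma frob_norm_eq_sqrt_frob_sq: "frob_norm M = sqrt (frob_sq M)"
  unfolding frob_norm_def frob_sq_def ..

lemma frob_sq_nonneg: "frob_sq M \<ge> 0"
  unfolding frob_sq_def by (intro sum_nonneg) auto

lemma index_gram_diag:
  assumes "b < dim_col (M::complex mat)"
  shows "(mat_adjoint M * M) $$ (b,b) = of_real (\<Sum>a<dim_row M. (cmod (M $$ (a,b)))^2)"
proof -
  have "(mat_adjoint M * M) $$ (b,b) = (\<Sum>a<dim_row M. cnj (M $$ (a,b)) * M $$ (a,b))"
    using assms by simp
  also have "\<dots> = (\<Sum>a<dim_row M. of_real ((cmod (M $$ (a,b)))^2))"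
    by (rule sum.cong) (auto simp: complex_norm_square[symmetric] mult.commute)
  finally show ?thesis by simp
qed

lemma frob_sq_gram: "frob_sq M = (\<Sum>b < dim_col M. Re ((mat_adjoint M * M) $$ (b,b)))"
proof -
  have "frob_sq M = (\<Sum>b < dim_col M. \<Sum>a < dim_row M. (cmod (M $$ (a,b)))^2)"
    unfolding frob_sq_def by (rule sum.swap)
  also have "\<dots> = (\<Sum>b < dim_col M. Re ((mat_adjoint M * M) $$ (b,b)))"
    by (rule sum.cong[OF refl]) (simp only: index_gram_diag lessThan_iff Re_complex_of_real)
  finally show ?thesis .
qed

lemma frob_sq_unitary_mult:
  assumes Q: "(Q::complex mat) \<in> carrier_mat k k" "mat_adjoint Q * Q = 1\<^sub>m k" and M: "M \<in> carrier_mat k c"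
  shows "frob_sq (Q * M) = frob_sq M"
proof -
  have "mat_adjoint (Q * M) * (Q * M) = mat_adjoint M * (mat_adjoint Q * (Q * M))"
    using Q M by (simp add: mat_adjoint_mult assoc_mult_mat')
  also have "mat_adjoint Q * (Q * M) = M" by (rule mult_cancel_left_inverse[OF Q(2)]) (use Q M in auto)
  finally show ?thesis unfolding frob_sq_gram using Q M by simp
qed

lemma frob_sq_minus_commute:
  assumes "A \<in> carrier_mat m c" "B \<in> carrier_mat m c"
  shows "frob_sq (A - B) = frob_sq (B - A)"
  unfolding frob_sq_def using assms by (simp add: norm_minus_commute)

lemma top_rows_zero_if_frob_sq_le:
  assumes M: "M \<in> carrier_mat m c" and M': "M' \<in> carrier_mat m c"
    and rows: "\<And>a b. a < m \<Longrightarrow> b < c \<Longrightarrow> M' $$ (a,b) = (if a < m1 then 0 else M $$ (a,b))"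
    and le: "frob_sq M \<le> frob_sq M'"
    and ab: "a < m1" "a < m" "b < c"
  shows "M $$ (a,b) = 0"
proof -
  let ?top = "\<lambda>a b. if a < m1 then (cmod (M $$ (a,b)))^2 else 0"
  have "frob_sq M = (\<Sum>a<m. \<Sum>b<c. ?top a b + (cmod (M' $$ (a,b)))^2)"
    unfolding frob_sq_def using M M' rows by (intro sum.cong refl) auto
  also have "\<dots> = (\<Sum>a<m. \<Sum>b<c. ?top a b) + frob_sq M'"
    unfolding frob_sq_def using M' by (simp add: sum.distrib)
  finally have "(\<Sum>a<m. \<Sum>b<c. ?top a b) = 0"
    using le by (smt (verit) sum_nonneg zero_le_power2)
  then have "\<forall>x\<in>{..<m}. (\<Sum>b<c. ?top x b) = 0"
    by (subst (asm) sum_nonneg_eq_0_iff) (auto intro: sum_nonneg)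
  then have "(\<Sum>b<c. ?top a b) = 0" using ab by blast
  then have "?top a b = 0"
    using ab by (subst (asm) sum_nonneg_eq_0_iff) auto
  then show ?thesis using ab by simp
qed

text \<open>If Q H = [R; 0] with R invertible, then Q maps the least squares residual Z - H Y to a matrix
  with vanishing top block: otherwise Y' = R\<inverse> (top block of Q Z) would do better.\<close>
lemma least_squares_rotated_residual_top_zero:
  assumes Q: "(Q::complex mat) \<in> carrier_mat m m" "mat_adjoint Q * Q = 1\<^sub>m m"
    and H: "H \<in> carrier_mat m m1" and m1: "m1 \<le> m" and Z: "Z \<in> carrier_mat m L"
    and tri: "\<forall>a<m. \<forall>b<m1. b < a \<longrightarrow> (Q * H) $$ (a,b) = 0"
    and nz: "det (blk 0 0 m1 m1 (Q * H)) \<noteq> 0"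
    and Y: "Y \<in> carrier_mat m1 L"
    and min: "\<forall>Y' \<in> carrier_mat m1 L. frob_norm (H * Y - Z) \<le> frob_norm (H * Y' - Z)"
    and ab: "a < m1" "b < L"
  shows "(Q * (Z - H * Y)) $$ (a,b) = 0"
proof -
  obtain Ri where Ri: "Ri \<in> carrier_mat m1 m1" "blk 0 0 m1 m1 (Q * H) * Ri = 1\<^sub>m m1"
    using invertible_if_det_nonzero[OF blk_carrier nz] by blast
  define Y' where "Y' = Ri * blk 0 0 m1 L (Q * Z)"
  have Y': "Y' \<in> carrier_mat m1 L" unfolding Y'_def using Ri by simp
  have QH: "Q * H \<in> carrier_mat m m1" using Q H by simp
  have rotate: "Q * (Z - H * X) = Q * Z - (Q * H) * X" if X: "X \<in> carrier_mat m1 L" for X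
  proof -
    have "Q * (Z - H * X) = Q * Z - Q * (H * X)"
      by (rule mult_minus_distrib_mat[OF Q(1) Z mult_carrier_mat[OF H X]])
    also have "Q * (H * X) = (Q * H) * X" using Q H X by (simp add: assoc_mult_mat')
    finally show ?thesis .
  qed
  have lower: "((Q * H) * X) $$ (a,b) = 0" if X: "X \<in> carrier_mat m1 L" and a: "m1 \<le> a" "a < m" and "b < L"
    for X a b
  proof -
    have "((Q * H) * X) $$ (a,b) = (\<Sum>c<m1. (Q * H) $$ (a,c) * X $$ (c,b))"
      using carrier_matD[OF QH] X that by simp
    then show ?thesis using tri that by (simp add: sum.neutral)
  qed
  have upper: "((Q * H) * Y') $$ (a,b) = (Q * Z) $$ (a,b)" if "a < m1" "b < L" for a b
  proof -
    have "((Q * H) * Y') $$ (a,b) = (blk 0 0 m1 m1 (Q * H) * Y') $$ (a,b)"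
      using carrier_matD[OF QH] Y' that m1 by simp
    also have "blk 0 0 m1 m1 (Q * H) * Y' = blk 0 0 m1 L (Q * Z)"
      unfolding Y'_def by (rule mult_cancel_left_inverse[OF Ri(2)]) (use Ri in auto)
    finally show ?thesis using that by simp
  qed
  have HY: "H * Y \<in> carrier_mat m L" "H * Y' \<in> carrier_mat m L" using H Y Y' by auto
  have "frob_sq (Q * (Z - H * Y)) = frob_sq (H * Y - Z)"
    using frob_sq_unitary_mult[OF Q minus_carrier_mat[OF HY(1)]] frob_sq_minus_commute[OF Z HY(1)] by simp
  also have "\<dots> \<le> frob_sq (H * Y' - Z)"
    using min Y' by (auto simp: frob_norm_eq_sqrt_frob_sq)
  also have "\<dots> = frob_sq (Q * (Z - H * Y'))"
    using frob_sq_unitary_mult[OF Q minus_carrier_mat[OF HY(2)]] frob_sq_minus_commute[OF Z HY(2)] by simp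
  finally have le: "frob_sq (Q * (Z - H * Y)) \<le> frob_sq (Q * (Z - H * Y'))" .
  show ?thesis
  proof (rule top_rows_zero_if_frob_sq_le[OF _ _ _ le ab(1) _ ab(2)])
    fix a b assume "a < m" "b < L"
    then show "(Q * (Z - H * Y')) $$ (a,b) = (if a < m1 then 0 else (Q * (Z - H * Y)) $$ (a,b))"
      unfolding rotate[OF Y] rotate[OF Y'] using QH Q Z Y Y' lower[of Y a b] lower[of Y' a b] upper[of a b]
      by (cases "a < m1") simp_all
  qed (use Q H Y Y' Z ab m1 in auto)
qed

section \<open>Singular values\<close>

lemma unitary_first_block_col:
  assumes Om: "(Om::complex mat) \<in> carrier_mat (2*L) (2*L)" "mat_adjoint Om * Om = 1\<^sub>m (2*L)"
  shows "mat_adjoint (blk 0 0 L L Om) * blk 0 0 L L Om + mat_adjoint (blk L 0 L L Om) * blk L 0 L L Om = 1\<^sub>m L"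
proof (rule eq_matI)
  fix a b assume "a < dim_row (1\<^sub>m L :: complex mat)" "b < dim_col (1\<^sub>m L :: complex mat)"
  then have ab: "a < L" "b < L" by auto
  have split: "(\<Sum>k<N+L. f k) = (\<Sum>k<N. f k) + (\<Sum>k<L. f (k + N))" for N and f :: "nat \<Rightarrow> complex"
    by (induction L) (simp_all add: add.commute add.left_commute)
  have "1\<^sub>m L $$ (a,b) = (mat_adjoint Om * Om) $$ (a,b)" using Om(2) ab by simp
  also have "\<dots> = (\<Sum>k<L+L. cnj (Om $$ (k,a)) * Om $$ (k,b))" using Om(1) ab by (simp add: mult_2)
  also have "\<dots> = (\<Sum>k<L. cnj (Om $$ (k,a)) * Om $$ (k,b)) + (\<Sum>k<L. cnj (Om $$ (k+L,a)) * Om $$ (k+L,b))"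
    by (rule split)
  finally show "(mat_adjoint (blk 0 0 L L Om) * blk 0 0 L L Om
      + mat_adjoint (blk L 0 L L Om) * blk L 0 L L Om) $$ (a,b) = 1\<^sub>m L $$ (a,b)"
    using ab by simp
qed simp_all

lemma gram_rayleigh_quotient:
  assumes P: "P \<in> carrier_mat q L" and V: "V \<in> carrier_mat L 1"
    and eig: "(mat_adjoint P * P) * V = z \<cdot>\<^sub>m V"
  shows "frob_sq (P * V) = Re z * frob_sq V"
proof -
  have "mat_adjoint (P * V) * (P * V) = mat_adjoint V * ((mat_adjoint P * P) * V)"
    using P V by (simp add: mat_adjoint_mult assoc_mult_mat')
  also have "\<dots> = z \<cdot>\<^sub>m (mat_adjoint V * V)"
    unfolding eig using V by (simp add: mult_smult_distrib[of _ 1 L])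
  finally have "(mat_adjoint (P * V) * (P * V)) $$ (0,0) = z * (mat_adjoint V * V) $$ (0,0)"
    using V by simp
  then show ?thesis using P V by (simp add: frob_sq_gram index_gram_diag)
qed

text \<open>Both G = P1^* P1 and 1 - G = P^* P are positive semidefinite.\<close>
lemma eigenvalue_gram_unit_interval:
  assumes G: "(G::complex mat) \<in> carrier_mat L L" and P: "P \<in> carrier_mat q L"
    and GP: "G + mat_adjoint P * P = 1\<^sub>m L"
    and P1: "P1 \<in> carrier_mat q1 L" and G1: "G = mat_adjoint P1 * P1"
    and root: "poly (char_poly G) z = 0"
  shows "0 \<le> Re z \<and> Re z \<le> 1"
proof -
  from root eigenvalue_root_char_poly[OF G] have "eigenvalue G z" by simp
  then obtain v where v: "v \<in> carrier_vec L" "v \<noteq> 0\<^sub>v L" "G *\<^sub>v v = z \<cdot>\<^sub>v v"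
    unfolding eigenvalue_def eigenvector_def using G by auto
  define V where "V = mat L 1 (\<lambda>(i,_). v $ i)"
  have V: "V \<in> carrier_mat L 1" unfolding V_def by simp
  have GV: "(G * V) $$ (i,0) = z * V $$ (i,0)" if "i < L" for i
  proof -
    have "col V 0 = v" unfolding V_def using v by (auto intro!: eq_vecI)
    then have "(G * V) $$ (i,0) = (G *\<^sub>v v) $ i" using G V that by (simp add: scalar_prod_def)
    then show ?thesis using v that unfolding V_def by simp
  qed
  have "G * V + (mat_adjoint P * P) * V = (G + mat_adjoint P * P) * V"
    by (rule add_mult_distrib_mat[symmetric, OF G mult_carrier_mat[OF mat_adjoint_carrier[OF P] P] V])
  also have "\<dots> = V" using GP left_mult_one_mat[OF V] by simp
  finally have "(G * V + (mat_adjoint P * P) * V) $$ (i,0) = V $$ (i,0)" for i by simp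
  then have sum: "(G * V) $$ (i,0) + ((mat_adjoint P * P) * V) $$ (i,0) = V $$ (i,0)" if "i < L" for i
    using G P V that by (subst index_add_mat(1)[symmetric]) auto
  have "(mat_adjoint P1 * P1) * V = z \<cdot>\<^sub>m V"
    using GV G V unfolding G1[symmetric] by (intro eq_matI) auto
  then have z: "frob_sq (P1 * V) = Re z * frob_sq V" by (rule gram_rayleigh_quotient[OF P1 V])
  have "(mat_adjoint P * P) * V = (1 - z) \<cdot>\<^sub>m V"
  proof (rule eq_matI)
    fix i k assume "i < dim_row ((1 - z) \<cdot>\<^sub>m V)" "k < dim_col ((1 - z) \<cdot>\<^sub>m V)"
    then have "i < L" "k = 0" using V by auto
    then show "((mat_adjoint P * P) * V) $$ (i,k) = ((1 - z) \<cdot>\<^sub>m V) $$ (i,k)"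
      using sum[of i] GV[of i] V by (auto simp: algebra_simps eq_diff_eq')
  qed (use P V in auto)
  then have one_minus_z: "frob_sq (P * V) = (1 - Re z) * frob_sq V"
    using gram_rayleigh_quotient[OF P V] by simp
  obtain k where k: "k < L" "v $ k \<noteq> 0" using v by (metis eq_vecI carrier_vecD index_zero_vec)
  have "0 < (cmod (V $$ (k,0)))^2" using k unfolding V_def by simp
  also have "\<dots> \<le> (\<Sum>a<L. (cmod (V $$ (a,0)))^2)" by (rule member_le_sum) (use k in auto)
  also have "\<dots> = frob_sq V" unfolding frob_sq_def using V by simp
  finally have "frob_sq V > 0" .
  with z one_minus_z frob_sq_nonneg[of "P1 * V"] frob_sq_nonneg[of "P * V"] show ?thesis
    by (simp add: zero_le_mult_iff)
qed

lemma proots_linear_factors: "proots (\<Prod>a\<leftarrow>xs. [:- a, 1:]) = mset (xs :: complex list)"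
proof (induction xs)
  case (Cons x xs)
  have "(\<Prod>a\<leftarrow>xs. [:- a, 1:]) \<noteq> (0 :: complex poly)"
    by (auto simp: prod_list_zero_iff)
  then have "proots ([:- x, 1:] * (\<Prod>a\<leftarrow>xs. [:- a, 1:])) = proots [:- x, 1:] + proots (\<Prod>a\<leftarrow>xs. [:- a, 1:])"
    by (intro proots_mult) auto
  then show ?case using Cons proots_linear_factor[of "-x"] by simp
qed simp

lemma proots_char_poly_diag:
  "proots (char_poly (mat L L (\<lambda>(a,b). if a = b then d a else 0) :: complex mat)) = mset (map d [0..<L])"
proof -
  let ?D = "mat L L (\<lambda>(a,b). if a = b then d a else 0) :: complex mat"
  have "char_poly ?D = (\<Prod>a\<leftarrow>diag_mat ?D. [:- a, 1:])"
    by (rule char_poly_upper_triangular[of _ L]) (auto simp: upper_triangular_def)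
  moreover have "diag_mat ?D = map d [0..<L]" unfolding diag_mat_def by auto
  ultimately show ?thesis by (simp only: proots_linear_factors)
qed

lemma singvals_upper_block_unit_interval:
  assumes Om: "(Om::complex mat) \<in> carrier_mat (2*L) (2*L)" "mat_adjoint Om * Om = 1\<^sub>m (2*L)"
    and x: "x \<in># singvals (blk 0 0 L L Om)"
  shows "0 \<le> x \<and> x \<le> 1"
proof -
  let ?G = "mat_adjoint (blk 0 0 L L Om) * blk 0 0 L L Om"
  have G: "?G \<in> carrier_mat L L" by (rule mult_carrier_mat[OF mat_adjoint_carrier[OF blk_carrier] blk_carrier])
  from x obtain z where z: "z \<in># proots (char_poly ?G)" "x = sqrt (Re z)" unfolding singvals_def by auto
  have "char_poly ?G \<noteq> 0" using degree_monic_char_poly[OF G] by auto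
  then have "poly (char_poly ?G) z = 0" using z(1) by simp
  from eigenvalue_gram_unit_interval[OF G blk_carrier unitary_first_block_col[OF Om] blk_carrier refl this]
  show ?thesis using z(2) by simp
qed

lemma cos_arccos_singvals_upper_block:
  assumes "(Om::complex mat) \<in> carrier_mat (2*L) (2*L)" "mat_adjoint Om * Om = 1\<^sub>m (2*L)"
  shows "image_mset cos (image_mset arccos (singvals (blk 0 0 L L Om))) = singvals (blk 0 0 L L Om)"
proof -
  have "image_mset (cos \<circ> arccos) (singvals (blk 0 0 L L Om)) = image_mset id (singvals (blk 0 0 L L Om))"
  proof (rule multiset.map_cong0)
    fix z assume "z \<in> set_mset (singvals (blk 0 0 L L Om))"
    then have "0 \<le> z" "z \<le> 1" using singvals_upper_block_unit_interval[OF assms] by auto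
    then show "(cos \<circ> arccos) z = id z" by simp
  qed
  then show ?thesis by (simp add: multiset.map_comp)
qed

lemma singvals_eq_if_gram_unitarily_similar:
  assumes M: "(M::complex mat) \<in> carrier_mat p L" and K: "K \<in> carrier_mat q L"
    and T: "T \<in> carrier_mat L L" "mat_adjoint T * T = 1\<^sub>m L"
    and gram: "mat_adjoint M * M = mat_adjoint T * (mat_adjoint K * K) * T"
  shows "singvals M = singvals K"
proof -
  have "similar_mat (mat_adjoint M * M) (mat_adjoint K * K)"
    unfolding similar_mat_def similar_mat_wit_def Let_def
    by (rule exI[of _ "mat_adjoint T"], rule exI[of _ T]) (use M K T unitary_right_inverse[OF T] gram in auto)
  then show ?thesis unfolding singvals_def by (simp add: char_poly_similar)
qed

lemma singvals_isometry_mult: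
  assumes "E \<in> carrier_mat p q" "mat_adjoint E * E = 1\<^sub>m q" "M \<in> carrier_mat q L"
  shows "singvals (E * M) = singvals M"
proof -
  have "mat_adjoint (E * M) * (E * M) = mat_adjoint M * (mat_adjoint E * (E * M))"
    using assms by (simp add: mat_adjoint_mult assoc_mult_mat')
  also have "mat_adjoint E * (E * M) = M" by (rule mult_cancel_left_inverse) (use assms in auto)
  finally show ?thesis unfolding singvals_def by simp
qed

lemma singvals_cross_gram_basis_change:
  assumes U0: "U0 \<in> carrier_mat n L" "mat_adjoint U0 * U0 = 1\<^sub>m L"
    and W0: "W0 \<in> carrier_mat n m" "mat_adjoint W0 * W0 = 1\<^sub>m m"
    and U: "U \<in> carrier_mat n L" "mat_adjoint U * U = 1\<^sub>m L"
    and Wb: "Wb \<in> carrier_mat n p" "mat_adjoint Wb * Wb = 1\<^sub>m p"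
    and sub: "colspace U \<subseteq> colspace U0" and eq: "colspace Wb = colspace W0"
  shows "singvals (mat_adjoint Wb * U) = singvals (mat_adjoint W0 * U0)"
proof -
  define T1 where "T1 = mat_adjoint U0 * U"
  define T2 where "T2 = mat_adjoint W0 * Wb"
  have T1: "T1 \<in> carrier_mat L L" and T2: "T2 \<in> carrier_mat m p"
    unfolding T1_def T2_def using U0 U W0 Wb by auto
  have U_eq: "U = U0 * T1" unfolding T1_def
    by (rule orthonormal_projector_fixes[OF U0 U(1) sub, symmetric])
  have Wb_eq: "Wb = W0 * T2" unfolding T2_def
    by (rule orthonormal_projector_fixes[OF W0 Wb(1), symmetric]) (use eq in simp)
  have W0_eq: "Wb * (mat_adjoint Wb * W0) = W0"
    by (rule orthonormal_projector_fixes[OF Wb W0(1)]) (use eq in simp)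
  have "mat_adjoint T1 * T1 = mat_adjoint U * (U0 * (mat_adjoint U0 * U))"
    unfolding T1_def using U0 U by (simp add: mat_adjoint_mult assoc_mult_mat')
  then have oT1: "mat_adjoint T1 * T1 = 1\<^sub>m L"
    using U_eq U(2) unfolding T1_def by simp
  have "T2 * mat_adjoint T2 = mat_adjoint W0 * (Wb * (mat_adjoint Wb * W0))"
    unfolding T2_def using W0 Wb by (simp add: mat_adjoint_mult assoc_mult_mat')
  then have T2T2: "T2 * mat_adjoint T2 = 1\<^sub>m m" unfolding W0_eq W0(2) .
  define K where "K = mat_adjoint W0 * U0"
  have K: "K \<in> carrier_mat m L" unfolding K_def using W0 U0 by auto
  have "mat_adjoint Wb * U = mat_adjoint T2 * (K * T1)"
    unfolding K_def by (subst U_eq, subst Wb_eq) (use W0 T2 U0 T1 in \<open>simp add: mat_adjoint_mult assoc_mult_mat'\<close>)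
  then have "mat_adjoint (mat_adjoint Wb * U) * (mat_adjoint Wb * U)
      = mat_adjoint T1 * (mat_adjoint K * (T2 * (mat_adjoint T2 * (K * T1))))"
    using T1 T2 K by (simp add: mat_adjoint_mult assoc_mult_mat')
  also have "T2 * (mat_adjoint T2 * (K * T1)) = K * T1"
    by (rule mult_cancel_left_inverse[OF T2T2]) (use T2 K T1 in simp_all)
  finally have gram: "mat_adjoint (mat_adjoint Wb * U) * (mat_adjoint Wb * U)
      = mat_adjoint T1 * (mat_adjoint K * K) * T1"
    using T1 K by (simp add: assoc_mult_mat')
  show ?thesis unfolding K_def[symmetric]
    by (rule singvals_eq_if_gram_unitarily_similar[OF _ K T1 oT1 gram]) (use Wb U in auto)
qed

lemma real_nonneg_diag_square:
  assumes C: "(C::complex mat) \<in> carrier_mat L L" "real_nonneg_diag C"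
  shows "mat_adjoint C = C"
    and "C * C = mat L L (\<lambda>(a,b). if a = b then complex_of_real ((Re (C $$ (a,a)))^2) else 0)"
proof -
  have off: "C $$ (a,b) = 0" if "a < L" "b < L" "a \<noteq> b" for a b
    using C that unfolding real_nonneg_diag_def by auto
  have real: "C $$ (a,a) = complex_of_real (Re (C $$ (a,a)))" if "a < L" for a
    using C that unfolding real_nonneg_diag_def by (auto simp: complex_eq_iff)
  show adj: "mat_adjoint C = C"
  proof (rule eq_matI)
    fix a b assume "a < dim_row C" "b < dim_col C"
    then show "mat_adjoint C $$ (a,b) = C $$ (a,b)"
      using C off real[of a] by (cases "a = b") (auto simp: complex_eq_iff)
  qed (use C in auto)
  show "C * C = mat L L (\<lambda>(a,b). if a = b then complex_of_real ((Re (C $$ (a,a)))^2) else 0)"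
  proof (rule eq_matI)
    fix a b assume "a < dim_row (mat L L (\<lambda>(a,b). if a = b then complex_of_real ((Re (C $$ (a,a)))^2) else 0))"
      "b < dim_col (mat L L (\<lambda>(a,b). if a = b then complex_of_real ((Re (C $$ (a,a)))^2) else 0))"
    then have ab: "a < L" "b < L" by auto
    have "(C * C) $$ (a,b) = C $$ (a,a) * C $$ (a,b)"
      using C ab off by (simp, subst sum_nat_single[where t = a]) auto
    also have "\<dots> = (if a = b then complex_of_real ((Re (C $$ (a,a)))^2) else 0)"
      using ab off[of a b] real[of a] by (cases "a = b") (auto simp: power2_eq_square)
    finally show "(C * C) $$ (a,b) = mat L L (\<lambda>(a,b). if a = b then complex_of_real ((Re (C $$ (a,a)))^2) else 0) $$ (a,b)"
      using ab by simp
  qed (use C in auto)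
qed

lemma singvals_svd:
  assumes U: "(U::complex mat) \<in> carrier_mat L L" "mat_adjoint U * U = 1\<^sub>m L"
    and V: "V \<in> carrier_mat L L" "mat_adjoint V * V = 1\<^sub>m L"
    and C: "C \<in> carrier_mat L L" "real_nonneg_diag C"
  shows "singvals (U * C * mat_adjoint V) = mset (map (\<lambda>a. Re (C $$ (a,a))) [0..<L])"
proof -
  let ?D = "mat L L (\<lambda>(a,b). if a = b then complex_of_real ((Re (C $$ (a,a)))^2) else 0) :: complex mat"
  have "mat_adjoint (U * C * mat_adjoint V) * (U * C * mat_adjoint V)
      = V * (mat_adjoint C * (mat_adjoint U * (U * (C * mat_adjoint V))))"
    using U V C by (simp add: mat_adjoint_mult assoc_mult_mat')
  also have "mat_adjoint U * (U * (C * mat_adjoint V)) = C * mat_adjoint V"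
    by (rule mult_cancel_left_inverse[OF U(2)]) (use U V C in auto)
  also have "V * (mat_adjoint C * (C * mat_adjoint V)) = V * ?D * mat_adjoint V"
    unfolding real_nonneg_diag_square(1)[OF C] real_nonneg_diag_square(2)[OF C, symmetric]
    using V C by (simp add: assoc_mult_mat')
  finally have "similar_mat (mat_adjoint (U * C * mat_adjoint V) * (U * C * mat_adjoint V)) ?D"
    unfolding similar_mat_def similar_mat_wit_def Let_def
    by (intro exI[of _ V] exI[of _ "mat_adjoint V"]) (use V unitary_right_inverse[OF V] in auto)
  then have "singvals (U * C * mat_adjoint V)
      = image_mset (\<lambda>z. sqrt (Re z)) (mset (map (\<lambda>a. complex_of_real ((Re (C $$ (a,a)))^2)) [0..<L]))"
    unfolding singvals_def by (simp only: char_poly_similar proots_char_poly_diag)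
  also have "\<dots> = mset (map (\<lambda>a. Re (C $$ (a,a))) [0..<L])"
    unfolding mset_map[symmetric] map_map
    by (rule arg_cong[where f = mset], rule map_cong) (use C in \<open>auto simp: real_nonneg_diag_def\<close>)
  finally show ?thesis .
qed

lemma cos_sin_arccos_cs_pair:
  assumes C: "(C::complex mat) \<in> carrier_mat L L" "real_nonneg_diag C"
    and S: "S \<in> carrier_mat L L" "real_nonneg_diag S"
    and CS: "C * C + S * S = 1\<^sub>m L" and a: "a < L"
  shows "(cos (arccos (Re (C $$ (a,a)))), sin (arccos (Re (C $$ (a,a))))) = (Re (C $$ (a,a)), Re (S $$ (a,a)))"
proof -
  let ?c = "Re (C $$ (a,a))" and ?s = "Re (S $$ (a,a))"
  have "(C * C + S * S) $$ (a,a) = 1" using CS a by simp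
  then have "complex_of_real (?c^2) + complex_of_real (?s^2) = 1"
    using C S a by (simp add: real_nonneg_diag_square)
  then have "Re (complex_of_real (?c^2) + complex_of_real (?s^2)) = Re 1" by (rule arg_cong)
  then have cs1: "?c^2 + ?s^2 = 1" by simp
  have c0: "?c \<ge> 0" and s0: "?s \<ge> 0" using C S a unfolding real_nonneg_diag_def by auto
  have c1: "?c \<le> 1"
  proof (rule ccontr)
    assume "\<not> ?c \<le> 1"
    then have "?c^2 > 1" by (simp add: one_less_power)
    with cs1 show False by (smt (verit) zero_le_power2)
  qed
  have "sin (arccos ?c) = sqrt (1 - ?c^2)" using c0 c1 by (simp add: sin_arccos)
  also have "1 - ?c^2 = ?s^2" using cs1 by simp
  also have "sqrt (?s^2) = ?s" using s0 by simp
  finally show ?thesis using c0 c1 by simp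
qed

lemma cos_sin_arccos_singvals_cs:
  assumes U: "U \<in> carrier_mat L L" "unitary_mat U" and V: "V \<in> carrier_mat L L" "unitary_mat V"
    and C: "C \<in> carrier_mat L L" "real_nonneg_diag C" and S: "S \<in> carrier_mat L L" "real_nonneg_diag S"
    and CS: "C * C + S * S = 1\<^sub>m L"
  shows "image_mset (\<lambda>\<theta>. (cos \<theta>, sin \<theta>)) (image_mset arccos (singvals (U * C * mat_adjoint V)))
      = mset (map (\<lambda>a. (Re (C $$ (a,a)), Re (S $$ (a,a)))) [0..<L])"
proof -
  have "singvals (U * C * mat_adjoint V) = mset (map (\<lambda>a. Re (C $$ (a,a))) [0..<L])"
    using U V unfolding unitary_mat_def orthonormal_cols_def by (intro singvals_svd C) auto
  then have "image_mset (\<lambda>\<theta>. (cos \<theta>, sin \<theta>)) (image_mset arccos (singvals (U * C * mat_adjoint V)))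
      = mset (map (\<lambda>a. (cos (arccos (Re (C $$ (a,a)))), sin (arccos (Re (C $$ (a,a)))))) [0..<L])"
    by (simp add: multiset.map_comp comp_def)
  also have "\<dots> = mset (map (\<lambda>a. (Re (C $$ (a,a)), Re (S $$ (a,a)))) [0..<L])"
    by (rule arg_cong[where f = mset], rule map_cong[OF refl]) (use cos_sin_arccos_cs_pair[OF C S CS] in simp)
  finally show ?thesis .
qed

section \<open>One step of block GMRES\<close>

lemma block_hessenberg_leading_cols:
  assumes H: "H \<in> carrier_mat ((j+1)*L) (j*L)" and hess: "block_hessenberg L H" and L: "L \<ge> 1"
  shows "blk 0 0 ((j+1)*L) ((j-1)*L) H = embed_mat ((j+1)*L) (j*L) 0 * blk 0 0 (j*L) ((j-1)*L) H"
proof -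
  have "embed_mat ((j+1)*L) (j*L) 0 * blk 0 0 (j*L) ((j-1)*L) (blk 0 0 ((j+1)*L) ((j-1)*L) H)
      = blk 0 0 ((j+1)*L) ((j-1)*L) H"
  proof (rule embed_mat_blk[OF blk_carrier])
    fix a b assume ab: "a < (j+1)*L" "b < (j-1)*L" "\<not> (0 \<le> a \<and> a < 0 + j*L)"
    then have "j*L div L \<le> a div L" by (intro div_le_mono) simp
    then have "j \<le> a div L" using L by simp
    moreover have "b div L < j - 1" using ab(2) by (rule less_mult_imp_div_less)
    moreover have "b < j*L" using ab(2) by (meson diff_le_self less_le_trans mult_le_mono1)
    ultimately show "blk 0 0 ((j+1)*L) ((j-1)*L) H $$ (a,b) = 0"
      using hess H ab unfolding block_hessenberg_def by auto
  qed simp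
  then show ?thesis by (simp add: blk_blk)
qed

locale block_gmres_step =
  fixes n L j :: nat
    and A B X0 V1 S0 W H Y :: "complex mat"
    and Om :: "nat \<Rightarrow> complex mat"
  assumes L: "L \<ge> 1" and j: "j \<ge> 2"
    and A: "A \<in> carrier_mat n n" and B: "B \<in> carrier_mat n L" and X0: "X0 \<in> carrier_mat n L"
    and S0: "S0 \<in> carrier_mat L L" and QR0: "B - A * X0 = V1 * S0"
    and W: "W \<in> carrier_mat n ((j+1)*L)" "orthonormal_cols W" "blk 0 0 n L W = V1"
    and H: "H \<in> carrier_mat ((j+1)*L) (j*L)" "block_hessenberg L H"
    and arnoldi: "A * blk 0 0 n (j*L) W = W * H"
    and Om: "\<forall>i \<in> {1..j}. Om i \<in> carrier_mat (2*L) (2*L) \<and> unitary_mat (Om i)"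
    and QRH: "\<forall>k \<in> {1..j}.
         (\<forall>a < (k+1)*L. \<forall>b < k*L. b < a \<longrightarrow>
             (Qbar L Om k * blk 0 0 ((k+1)*L) (k*L) H) $$ (a,b) = 0) \<and>
         det (blk 0 0 (k*L) (k*L) (Qbar L Om k * blk 0 0 ((k+1)*L) (k*L) H)) \<noteq> 0"
    and Y: "Y \<in> carrier_mat ((j-1)*L) L"
    and Ymin: "\<forall>Y' \<in> carrier_mat ((j-1)*L) L.
         frob_norm (blk 0 0 (j*L) ((j-1)*L) H * Y - Emat L j * S0)
           \<le> frob_norm (blk 0 0 (j*L) ((j-1)*L) H * Y' - Emat L j * S0)"
begin

abbreviation "m1 \<equiv> (j-1)*L"
abbreviation "m \<equiv> j*L"
abbreviation "Wj \<equiv> blk 0 0 n m W"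
abbreviation "Hprev \<equiv> blk 0 0 m m1 H"
abbreviation "Qprev \<equiv> Qbar L Om (j-1)"
abbreviation "Qlast \<equiv> Qbar L Om j"
abbreviation "residual \<equiv> B - A * (X0 + blk 0 0 n m1 W * Y)"

lemma block_sizes: "m1 + L = m" "m + L = (j+1)*L" "m1 \<le> m" "L \<le> m"
  using j by (cases j; simp add: algebra_simps)+

lemma W_orthonormal: "mat_adjoint W * W = 1\<^sub>m ((j+1)*L)"
  using W unfolding orthonormal_cols_def by simp

lemma Om_unitary:
  assumes "i \<in> {1..j}"
  shows "Om i \<in> carrier_mat (2*L) (2*L)" "mat_adjoint (Om i) * Om i = 1\<^sub>m (2*L)"
proof -
  show Oi: "Om i \<in> carrier_mat (2*L) (2*L)" using Om assms by blast
  have "unitary_mat (Om i)" using Om assms by blast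
  then show "mat_adjoint (Om i) * Om i = 1\<^sub>m (2*L)"
    using carrier_matD[OF Oi] unfolding unitary_mat_def orthonormal_cols_def by simp
qed

lemma Wj_eq: "Wj = W * embed_mat ((j+1)*L) m 0"
  by (rule mult_embed_mat[OF W(1), symmetric]) (use block_sizes in simp)

lemma Wj_orthonormal: "mat_adjoint Wj * Wj = 1\<^sub>m m"
  unfolding Wj_eq using block_sizes by (intro mult_orthonormal_cols[OF W(1) _ W_orthonormal embed_mat_orthonormal]) simp_all

lemma residual_eq: "residual = Wj * (Emat L j * S0 - Hprev * Y)"
proof -
  let ?E = "embed_mat ((j+1)*L) m 0"
  have "blk 0 0 n m1 W = blk 0 0 n m1 Wj" using block_sizes by (simp add: blk_blk)
  also have "\<dots> = Wj * embed_mat m m1 0" by (rule mult_embed_mat[OF blk_carrier, symmetric]) simp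
  finally have Wprev: "blk 0 0 n m1 W = Wj * embed_mat m m1 0" .
  have "A * blk 0 0 n m1 W = W * (H * embed_mat m m1 0)"
    unfolding Wprev using A W(1) H(1) by (simp add: assoc_mult_mat'[symmetric] arnoldi)
  also have "H * embed_mat m m1 0 = blk 0 0 ((j+1)*L) m1 H"
    by (rule mult_embed_mat[OF H(1)]) (use block_sizes in simp)
  also have "\<dots> = ?E * Hprev" by (rule block_hessenberg_leading_cols[OF H L])
  also have "W * (?E * Hprev) = Wj * Hprev"
    unfolding Wj_eq using W(1) by (simp add: assoc_mult_mat')
  finally have AW: "A * blk 0 0 n m1 W = Wj * Hprev" .
  have "V1 = blk 0 0 n L Wj" unfolding W(3)[symmetric] using block_sizes by (simp add: blk_blk)
  also have "\<dots> = Wj * Emat L j"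
    unfolding Emat_embed_mat by (rule mult_embed_mat[OF blk_carrier, symmetric]) (use block_sizes in simp)
  finally have V1_eq: "V1 = Wj * Emat L j" .
  have WY: "blk 0 0 n m1 W * Y \<in> carrier_mat n L" using Y by auto
  have AX0: "A * X0 \<in> carrier_mat n L" and AWY: "(A * blk 0 0 n m1 W) * Y \<in> carrier_mat n L"
    using A X0 Y by auto
  have "A * (X0 + blk 0 0 n m1 W * Y) = A * X0 + A * (blk 0 0 n m1 W * Y)"
    by (rule mult_add_distrib_mat[OF A X0 WY])
  also have "A * (blk 0 0 n m1 W * Y) = (A * blk 0 0 n m1 W) * Y"
    using A Y by (simp add: assoc_mult_mat')
  finally have "residual = (B - A * X0) - (A * blk 0 0 n m1 W) * Y"
    using carrier_matD[OF B] carrier_matD[OF AX0] carrier_matD[OF AWY] by (intro eq_matI) auto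
  also have "\<dots> = Wj * (Emat L j * S0) - Wj * (Hprev * Y)"
    unfolding QR0 AW V1_eq using S0 Y by (simp add: assoc_mult_mat' Emat_embed_mat)
  also have "\<dots> = Wj * (Emat L j * S0 - Hprev * Y)"
    using S0 Y by (intro mult_minus_distrib_mat[symmetric]) (auto simp: Emat_def)
  finally show ?thesis .
qed

lemma Qprev_eq: "Qprev = prodQ L Om j (j-1)"
  using j unfolding Qbar_def by simp

lemma Qprev_carrier: "Qprev \<in> carrier_mat m m"
  unfolding Qprev_eq by (rule prodQ_carrier)

lemma Qprev_unitary: "mat_adjoint Qprev * Qprev = 1\<^sub>m m"
  unfolding Qprev_eq using Om_unitary j by (intro prodQ_unitary) auto

lemma Qlast_carrier: "Qlast \<in> carrier_mat ((j+1)*L) ((j+1)*L)"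
  unfolding Qbar_def by (rule prodQ_carrier)

lemma Qlast_unitary: "mat_adjoint Qlast * Qlast = 1\<^sub>m ((j+1)*L)"
  unfolding Qbar_def using Om_unitary by (intro prodQ_unitary) auto

lemma rotated_residual_top_zero:
  assumes "a < m1" "b < L"
  shows "(Qprev * (Emat L j * S0 - Hprev * Y)) $$ (a,b) = 0"
proof (rule least_squares_rotated_residual_top_zero[OF Qprev_carrier Qprev_unitary blk_carrier block_sizes(3) _ _ _ Y Ymin assms])
  show "Emat L j * S0 \<in> carrier_mat m L" by (rule mult_carrier_mat[OF Emat_carrier S0])
  have "j - 1 \<in> {1..j}" and "j - 1 + 1 = j" using j by auto
  then show "\<forall>a<m. \<forall>b<m1. b < a \<longrightarrow> (Qprev * Hprev) $$ (a,b) = 0" and "det (blk 0 0 m1 m1 (Qprev * Hprev)) \<noteq> 0"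
    using QRH by (metis (no_types, lifting))+
qed

abbreviation "residual_basis \<equiv> Wj * mat_adjoint Qprev * embed_mat m L m1"
abbreviation "range_basis \<equiv> W * mat_adjoint Qlast * embed_mat ((j+1)*L) m 0"

lemma residual_basis_carrier: "residual_basis \<in> carrier_mat n L"
  using Qprev_carrier by auto

lemma residual_basis_orthonormal: "mat_adjoint residual_basis * residual_basis = 1\<^sub>m L"
proof (rule mult_orthonormal_cols[OF _ embed_mat_carrier _ embed_mat_orthonormal])
  show "Wj * mat_adjoint Qprev \<in> carrier_mat n m" using Qprev_carrier by auto
  show "mat_adjoint (Wj * mat_adjoint Qprev) * (Wj * mat_adjoint Qprev) = 1\<^sub>m m"
    using Qprev_carrier unitary_right_inverse[OF Qprev_carrier Qprev_unitary]
    by (intro mult_orthonormal_cols[OF blk_carrier _ Wj_orthonormal]) auto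
qed (use block_sizes in simp)

lemma colspace_residual: "colspace residual \<subseteq> colspace residual_basis"
proof -
  define d where "d = Emat L j * S0 - Hprev * Y"
  have d: "d \<in> carrier_mat m L" unfolding d_def using Y by (auto intro: minus_carrier_mat)
  have Qd: "Qprev * d \<in> carrier_mat m L" using Qprev_carrier d by auto
  have "Qprev * d = embed_mat m L m1 * blk m1 0 L L (Qprev * d)"
    by (rule embed_mat_blk[OF Qd block_sizes(1)[THEN eq_imp_le], symmetric])
      (use rotated_residual_top_zero block_sizes(1) in \<open>auto simp: d_def\<close>)
  then have eq: "residual = residual_basis * blk m1 0 L L (Qprev * d)"
    unfolding residual_eq d_def[symmetric]
    using Qprev_carrier d mult_cancel_left_inverse[OF Qprev_unitary, of d]
    by (simp add: assoc_mult_mat')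
  show ?thesis unfolding eq by (rule colspace_mult_subset[OF residual_basis_carrier blk_carrier])
qed

lemma range_basis_carrier: "range_basis \<in> carrier_mat n m"
  using W(1) Qlast_carrier by auto

lemma range_basis_orthonormal: "mat_adjoint range_basis * range_basis = 1\<^sub>m m"
proof (rule mult_orthonormal_cols[OF _ embed_mat_carrier _ embed_mat_orthonormal])
  show "W * mat_adjoint Qlast \<in> carrier_mat n ((j+1)*L)" using W(1) Qlast_carrier by auto
  show "mat_adjoint (W * mat_adjoint Qlast) * (W * mat_adjoint Qlast) = 1\<^sub>m ((j+1)*L)"
    using Qlast_carrier unitary_right_inverse[OF Qlast_carrier Qlast_unitary]
    by (intro mult_orthonormal_cols[OF W(1) _ W_orthonormal]) auto
qed simp

lemma range_eq: "A * Wj = range_basis * blk 0 0 m m (Qlast * H)"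
  and range_det: "det (blk 0 0 m m (Qlast * H)) \<noteq> 0"
proof -
  have "j \<in> {1..j}" using j by simp
  with QRH have "(\<forall>a < (j+1)*L. \<forall>b < m. b < a \<longrightarrow>
      (Qlast * blk 0 0 ((j+1)*L) m H) $$ (a,b) = 0) \<and> det (blk 0 0 m m (Qlast * blk 0 0 ((j+1)*L) m H)) \<noteq> 0"
    by blast
  then have QRHj: "(\<forall>a < (j+1)*L. \<forall>b < m. b < a \<longrightarrow> (Qlast * H) $$ (a,b) = 0) \<and>
      det (blk 0 0 m m (Qlast * H)) \<noteq> 0"
    unfolding blk_whole[OF H(1)] .
  then show "det (blk 0 0 m m (Qlast * H)) \<noteq> 0" by blast
  have QH: "Qlast * H \<in> carrier_mat ((j+1)*L) m" using Qlast_carrier H(1) by auto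
  have "Qlast * H = embed_mat ((j+1)*L) m 0 * blk 0 0 m m (Qlast * H)"
    by (rule embed_mat_blk[OF QH, symmetric]) (use QRHj in auto)
  moreover have "A * Wj = W * (mat_adjoint Qlast * (Qlast * H))"
    unfolding arnoldi by (subst mult_cancel_left_inverse[OF Qlast_unitary]) (use Qlast_carrier H(1) in auto)
  ultimately show "A * Wj = range_basis * blk 0 0 m m (Qlast * H)"
    using W(1) Qlast_carrier by (simp add: assoc_mult_mat')
qed

lemma colspace_range: "colspace (A * Wj) = colspace range_basis"
proof
  show "colspace (A * Wj) \<subseteq> colspace range_basis"
    unfolding range_eq by (rule colspace_mult_subset[OF range_basis_carrier blk_carrier])
  obtain Ri where Ri: "Ri \<in> carrier_mat m m" "blk 0 0 m m (Qlast * H) * Ri = 1\<^sub>m m"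
    using invertible_if_det_nonzero[OF blk_carrier range_det] by blast
  have "range_basis = (A * Wj) * Ri"
    unfolding range_eq using range_basis_carrier Ri by (simp add: assoc_mult_mat')
  then show "colspace range_basis \<subseteq> colspace (A * Wj)"
    using colspace_mult_subset[OF _ Ri(1), of "A * Wj" n] A by auto
qed

lemma cross_gram: "mat_adjoint range_basis * residual_basis = embed_mat m L m1 * blk 0 0 L L (Om j)"
proof -
  let ?T = "embed_mat ((j+1)*L) m 0" and ?E = "embed_mat m L m1"
  let ?Qj = "Qemb L (j+1) j (Om j)" and ?P = "prodQ L Om (j+1) (j-1)"
  have Qlast_eq: "Qlast = ?Qj * ?P" unfolding Qbar_def using j by (cases j) auto
  have PT: "?P * ?T = ?T * Qprev" unfolding Qprev_eq using j by (intro prodQ_mult_embed_mat) simp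
  have PTX: "?P * (?T * X) = ?T * (Qprev * X)" if "X \<in> carrier_mat m L" for X
  proof -
    have "?P * (?T * X) = (?P * ?T) * X" using that by (simp add: assoc_mult_mat')
    also have "\<dots> = ?T * (Qprev * X)" unfolding PT using that Qprev_carrier by (simp add: assoc_mult_mat')
    finally show ?thesis .
  qed
  have "mat_adjoint range_basis * residual_basis
      = mat_adjoint ?T * (Qlast * ((mat_adjoint W * W) * (?T * (mat_adjoint Qprev * ?E))))"
    unfolding Wj_eq using W(1) Qlast_carrier Qprev_carrier by (simp add: mat_adjoint_mult assoc_mult_mat')
  also have "\<dots> = mat_adjoint ?T * (?Qj * (?T * ((Qprev * mat_adjoint Qprev) * ?E)))"
  proof -
    have "mat_adjoint Qprev * ?E \<in> carrier_mat m L" using Qprev_carrier by auto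
    then show ?thesis unfolding W_orthonormal Qlast_eq using Qprev_carrier PTX
      by (simp add: assoc_mult_mat')
  qed
  also have "\<dots> = mat_adjoint ?T * (?Qj * embed_mat ((j+1)*L) L m1)"
    unfolding unitary_right_inverse[OF Qprev_carrier Qprev_unitary]
    using block_sizes by (simp add: embed_mat_mult_embed_mat)
  also have "?Qj * embed_mat ((j+1)*L) L m1 = blk 0 m1 ((j+1)*L) L ?Qj"
    by (rule mult_embed_mat[OF Qemb_carrier]) (use block_sizes in simp)
  also have "mat_adjoint ?T * blk 0 m1 ((j+1)*L) L ?Qj = blk 0 0 m L (blk 0 m1 ((j+1)*L) L ?Qj)"
    by (rule adjoint_embed_mat_mult[OF blk_carrier]) simp
  also have "\<dots> = ?E * blk 0 0 L L (Om j)"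
    using block_sizes j Qemb_block_col[of j L "Om j"] by (simp add: blk_blk)
  finally show ?thesis .
qed

lemma principal_angles_residual_range:
  assumes U: "U \<in> carrier_mat n L" "orthonormal_cols U" "colspace U = colspace residual"
    and Wb: "Wb \<in> carrier_mat n p" "orthonormal_cols Wb" "colspace Wb = colspace (A * Wj)"
  shows "principal_angles U Wb = image_mset arccos (singvals (blk 0 0 L L (Om j)))"
proof -
  have "singvals (mat_adjoint Wb * U) = singvals (mat_adjoint range_basis * residual_basis)"
    using U Wb colspace_residual colspace_range unfolding orthonormal_cols_def
    by (intro singvals_cross_gram_basis_change[OF residual_basis_carrier residual_basis_orthonormal
          range_basis_carrier range_basis_orthonormal]) auto
  also have "\<dots> = singvals (blk 0 0 L L (Om j))"
    unfolding cross_gram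
    by (rule singvals_isometry_mult[OF embed_mat_carrier embed_mat_orthonormal blk_carrier]) (use block_sizes in simp)
  finally show ?thesis unfolding principal_angles_def by simp
qed

end

theorem mainTheorem11:
  fixes n L j :: nat
    and A B X0 V1 S0 W H Y :: "complex mat"
    and Om :: "nat \<Rightarrow> complex mat"
  assumes "n \<ge> 1" "L \<ge> 1" "j \<ge> 2"
    and A: "A \<in> carrier_mat n n" and B: "B \<in> carrier_mat n L" and X0: "X0 \<in> carrier_mat n L"
    and QR0: "V1 \<in> carrier_mat n L" "orthonormal_cols V1" "S0 \<in> carrier_mat L L" "upper_tri S0"
             "B - A * X0 = V1 * S0"
    and W: "W \<in> carrier_mat n ((j+1)*L)" "orthonormal_cols W" "blk 0 0 n L W = V1"
    and H: "H \<in> carrier_mat ((j+1)*L) (j*L)" "block_hessenberg L H"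
    and arnoldi: "A * blk 0 0 n (j*L) W = W * H"
    and Hrank: "full_col_rank H"
    and Om: "\<forall>i \<in> {1..j}. Om i \<in> carrier_mat (2*L) (2*L) \<and> unitary_mat (Om i)"
    and QRH: "\<forall>k \<in> {1..j}.
         (\<forall>a < (k+1)*L. \<forall>b < k*L. b < a \<longrightarrow>
             (Qbar L Om k * blk 0 0 ((k+1)*L) (k*L) H) $$ (a,b) = 0) \<and>
         det (blk 0 0 (k*L) (k*L) (Qbar L Om k * blk 0 0 ((k+1)*L) (k*L) H)) \<noteq> 0"
    and Y: "Y \<in> carrier_mat ((j-1)*L) L"
    and Ymin: "\<forall>Y' \<in> carrier_mat ((j-1)*L) L.
         frob_norm (blk 0 0 (j*L) ((j-1)*L) H * Y - Emat L j * S0)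
           \<le> frob_norm (blk 0 0 (j*L) ((j-1)*L) H * Y' - Emat L j * S0)"
    and Frank: "full_col_rank (B - A * (X0 + blk 0 0 n ((j-1)*L) W * Y))"
  shows "\<forall>U Wb p. U \<in> carrier_mat n L \<and> orthonormal_cols U \<and>
           colspace U = colspace (B - A * (X0 + blk 0 0 n ((j-1)*L) W * Y)) \<and>
           Wb \<in> carrier_mat n p \<and> orthonormal_cols Wb \<and>
           colspace Wb = colspace (A * blk 0 0 n (j*L) W)
         \<longrightarrow>
           image_mset cos (principal_angles U Wb) = singvals (blk 0 0 L L (Om j)) \<and>
           (\<forall>U1 U2 V C S.
              U1 \<in> carrier_mat L L \<and> U2 \<in> carrier_mat L L \<and> V \<in> carrier_mat L L \<and>
              C \<in> carrier_mat L L \<and> S \<in> carrier_mat L L \<and>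
              unitary_mat U1 \<and> unitary_mat U2 \<and> unitary_mat V \<and>
              real_nonneg_diag C \<and> real_nonneg_diag S \<and> C * C + S * S = 1\<^sub>m L \<and>
              blk 0 0 L L (Om j) = U1 * C * mat_adjoint V \<and>
              blk L 0 L L (Om j) = U2 * S * mat_adjoint V
            \<longrightarrow> mset (map (\<lambda>a. (Re (C $$ (a,a)), Re (S $$ (a,a)))) [0..<L])
                = image_mset (\<lambda>\<theta>. (cos \<theta>, sin \<theta>)) (principal_angles U Wb))"
proof -
  interpret block_gmres_step n L j A B X0 V1 S0 W H Y Om
    using assms by unfold_locales auto
  show ?thesis
  proof (intro allI impI conjI)
    fix U Wb p
    assume "U \<in> carrier_mat n L \<and> orthonormal_cols U \<and> colspace U = colspace residual \<and>
      Wb \<in> carrier_mat n p \<and> orthonormal_cols Wb \<and> colspace Wb = colspace (A * Wj)"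
    then have angles: "principal_angles U Wb = image_mset arccos (singvals (blk 0 0 L L (Om j)))"
      by (intro principal_angles_residual_range) auto
    have Omj: "Om j \<in> carrier_mat (2*L) (2*L)" "mat_adjoint (Om j) * Om j = 1\<^sub>m (2*L)"
      using Om_unitary j by auto
    show "image_mset cos (principal_angles U Wb) = singvals (blk 0 0 L L (Om j))"
      unfolding angles by (rule cos_arccos_singvals_upper_block[OF Omj])
    fix U1 U2 V C S
    assume cs: "U1 \<in> carrier_mat L L \<and> U2 \<in> carrier_mat L L \<and> V \<in> carrier_mat L L \<and>
      C \<in> carrier_mat L L \<and> S \<in> carrier_mat L L \<and>
      unitary_mat U1 \<and> unitary_mat U2 \<and> unitary_mat V \<and>
      real_nonneg_diag C \<and> real_nonneg_diag S \<and> C * C + S * S = 1\<^sub>m L \<and>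
      blk 0 0 L L (Om j) = U1 * C * mat_adjoint V \<and> blk L 0 L L (Om j) = U2 * S * mat_adjoint V"
    then have Q11: "blk 0 0 L L (Om j) = U1 * C * mat_adjoint V" by blast
    show "mset (map (\<lambda>a. (Re (C $$ (a,a)), Re (S $$ (a,a)))) [0..<L])
        = image_mset (\<lambda>\<theta>. (cos \<theta>, sin \<theta>)) (principal_angles U Wb)"
      unfolding angles Q11 by (rule cos_sin_arccos_singvals_cs[symmetric]) (use cs in auto)
  qed
qed

end
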